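(* For every $P\in\mathbb{R}[X,Y]$ with $P(X,Y)=-P(Y,X)$, one has $\kappa(l_P)=l_Q$ where $Q(X,Y)=P(X,Y)-P(-X-Y,Y)+P(-X-Y,X)$.
   Context: $A=\mathbb{R}\langle x,y\rangle$; $L\subset A$ the free Lie algebra on $x,y$; $\operatorname{ad}_y(l)=[y,l]$. For $P=\sum c_{i,j}X^iY^j$ set $l_P=\sum c_{i,j}[\operatorname{ad}_y^i(x),\operatorname{ad}_y^j(x)]\in L$ (this identifies antisymmetric polynomials, $P(X,Y)=-P(Y,X)$, with the $x$-degree-$2$ part of $L$). $\operatorname{tr}$ is the projection $A\to A/\operatorname{span}\{ab-ba\}$, and $\partial_x:A/\operatorname{span}\{ab-ba\}\to A$ is $\operatorname{tr}(a_1\cdots a_n)\mapsto\sum_{i:\,a_i=x}a_{i+1}\cdots a_n a_1\cdots a_{i-1}$. The operator $\kappa:L\to L$ is $\kappa(l)=\partial_x(\operatorname{tr}(x\,l))$. *)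

theory Defs
  imports "HOL-Computational_Algebra.Polynomial" "HOL-Library.Function_Algebras"
begin

datatype gen = GX | GY

text \<open>Elements of A are coefficient functions on words (finitely supported ones
are the genuine elements; all constructions below preserve finite support).\<close>
type_synonym ncp = "gen list \<Rightarrow> real"

definition gx :: ncp where "gx = (\<lambda>w. if w = [GX] then 1 else 0)"
definition gy :: ncp where "gy = (\<lambda>w. if w = [GY] then 1 else 0)"

definition ncmul :: "ncp \<Rightarrow> ncp \<Rightarrow> ncp" where
  "ncmul a b = (\<lambda>w. \<Sum>i\<le>length w. a (take i w) * b (drop i w))"

definition bracket :: "ncp \<Rightarrow> ncp \<Rightarrow> ncp" where
  "bracket a b = ncmul a b - ncmul b a"

definition adypow :: "nat \<Rightarrow> ncp \<Rightarrow> ncp" where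
  "adypow i a = ((\<lambda>l. bracket gy l) ^^ i) a"

section \<open>Polynomials in two commuting variables: R[X,Y] = (R[X])[Y]\<close>

type_synonym bipoly = "real poly poly"

definition bcoeff :: "bipoly \<Rightarrow> nat \<Rightarrow> nat \<Rightarrow> real" where
  "bcoeff P i j = coeff (coeff P j) i"

definition Xb :: bipoly where "Xb = [:[:0, 1:]:]"
definition Yb :: bipoly where "Yb = [:0, 1:]"

text \<open>Substitution: bsubst P f g = P(f, g).\<close>
definition bsubst :: "bipoly \<Rightarrow> bipoly \<Rightarrow> bipoly \<Rightarrow> bipoly" where
  "bsubst P f g = (\<Sum>j\<le>degree P. poly (map_poly (\<lambda>a. [:[:a:]:]) (coeff P j)) f * g ^ j)"

definition lP :: "bipoly \<Rightarrow> ncp" where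
  "lP P = (\<Sum>j\<le>degree P. \<Sum>i\<le>degree (coeff P j).
            (\<lambda>w. bcoeff P i j * bracket (adypow i gx) (adypow j gx) w))"

text \<open>dx_tr is the composite of the trace projection tr : A \<rightarrow> A/[A,A] with
the cyclic derivative d_x, written out on A as the linear extension of
  a_1...a_n \<mapsto> sum over i with a_i = x of a_{i+1}...a_n a_1...a_{i-1}.\<close>
definition dx_tr :: "ncp \<Rightarrow> ncp" where
  "dx_tr a = (\<lambda>v. \<Sum>w\<in>{w. length w = Suc (length v)}.
      a w * (\<Sum>i<length w. if w ! i = GX \<and> drop (Suc i) w @ take i w = v then 1 else 0))"

definition kappa :: "ncp \<Rightarrow> ncp" where
  "kappa l = dx_tr (ncmul gx l)"

end

theory Submission
  imports Defs
begin

text \<open>Both sides are linear in \<open>P\<close>, so everything reduces to the brackets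
\<open>[x\<^sub>i, x\<^sub>j]\<close> with \<open>x\<^sub>i = ad\<^sub>y\<^sup>i x\<close>. The cyclic derivative of a product splits as
\<open>\<partial>\<^sub>x tr(a b) = J(a, b) + J(b, a)\<close>, where \<open>J(a, c)\<close> inserts \<open>c\<close> at the occurrences of
\<open>x\<close> in \<open>a\<close> and rotates. Since \<open>J(x, c) = c\<close>, \<open>J(y, c) = 0\<close> and
\<open>J(u w, c) = J(u, w c) + J(w, c u)\<close>, one gets \<open>J(x\<^sub>i, c) = D\<^sup>i c\<close> with \<open>D c = [c, y]\<close>, hence
\<open>\<kappa>[x\<^sub>i, x\<^sub>j] = [x\<^sub>i, x\<^sub>j] + D\<^sup>i [x\<^sub>j, x] - D\<^sup>j [x\<^sub>i, x]\<close>.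
On the polynomial side, multiplication by \<open>X + Y\<close> becomes \<open>ad\<^sub>y\<close> (a derivation), so
\<open>(-X-Y)\<^sup>i X\<^sup>j \<mapsto> D\<^sup>i [x\<^sub>j, x]\<close> and \<open>(-X-Y)\<^sup>i Y\<^sup>j \<mapsto> -D\<^sup>i [x\<^sub>j, x]\<close>; antisymmetry of \<open>P\<close> turns the
term \<open>-D\<^sup>j [x\<^sub>i, x]\<close> into a second copy of \<open>D\<^sup>i [x\<^sub>j, x]\<close>.\<close>

instantiation "fun" :: (type, real_vector) real_vector
begin

definition scaleR_fun :: "real \<Rightarrow> ('a \<Rightarrow> 'b) \<Rightarrow> 'a \<Rightarrow> 'b" where
  "scaleR_fun c f = (\<lambda>x. c *\<^sub>R f x)"

instance
  by standard (simp_all add: scaleR_fun_def fun_eq_iff scaleR_add_right scaleR_add_left)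

end

lemma scaleR_fun_apply [simp]: "(c *\<^sub>R f) x = c *\<^sub>R f x"
  by (simp add: scaleR_fun_def)

lemma linear_funpow:
  fixes f :: "'a::real_vector \<Rightarrow> 'a"
  assumes "linear f"
  shows "linear (f ^^ n)"
proof (induction n)
  case 0
  show ?case by (simp add: linearI)
next
  case (Suc n)
  then show ?case
    using linear_compose[OF Suc assms] by (simp only: funpow.simps)
qed

lemma sum_sum_swap_antisym:
  fixes F :: "nat \<Rightarrow> nat \<Rightarrow> 'a::real_vector"
  assumes "\<And>i j. c j i = - c i j"
  shows "(\<Sum>j\<le>N. \<Sum>i\<le>N. c i j *\<^sub>R F j i) = - (\<Sum>j\<le>N. \<Sum>i\<le>N. c i j *\<^sub>R F i j)"
proof -
  have "c j i *\<^sub>R F i j = - (c i j *\<^sub>R F i j)" for i j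
    by (simp add: assms[of i j])
  then show ?thesis
    by (subst sum.swap) (simp add: sum_negf)
qed

section \<open>Sums over the factorisations of a word\<close>

definition sum_splits :: "('a list \<Rightarrow> 'a list \<Rightarrow> 'b::comm_monoid_add) \<Rightarrow> 'a list \<Rightarrow> 'b" where
  "sum_splits g v = (\<Sum>i\<le>length v. g (take i v) (drop i v))"

lemma sum_splits_cong:
  "(\<And>p q. p @ q = v \<Longrightarrow> f p q = g p q) \<Longrightarrow> sum_splits f v = sum_splits g v"
  unfolding sum_splits_def by (intro sum.cong) auto

lemma sum_splits_add: "sum_splits (\<lambda>p q. f p q + g p q) v = sum_splits f v + sum_splits g v"
  by (simp add: sum_splits_def sum.distrib)

lemma sum_splits_mult_left:
  "c * sum_splits f v = sum_splits (\<lambda>p q. c * f p q) v" for c :: "'b::semiring_0"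
  by (simp add: sum_splits_def sum_distrib_left)

lemma sum_splits_mult_right:
  "sum_splits f v * c = sum_splits (\<lambda>p q. f p q * c) v" for c :: "'b::semiring_0"
  by (simp add: sum_splits_def sum_distrib_right)

lemma sum_splits_swap:
  "sum_splits (\<lambda>p q. sum_splits (f p q) w) v = sum_splits (\<lambda>r s. sum_splits (\<lambda>p q. f p q r s) v) w"
  unfolding sum_splits_def by (rule sum.swap)

lemma sum_splits_zero [simp]: "sum_splits (\<lambda>p q. 0) v = 0"
  by (simp add: sum_splits_def)

lemma sum_splits_Nil [simp]: "sum_splits g [] = g [] []"
  by (simp add: sum_splits_def)

lemma sum_splits_Cons: "sum_splits g (x # v) = g [] (x # v) + sum_splits (\<lambda>p q. g (x # p) q) v"
  unfolding sum_splits_def length_Cons sum.atMost_Suc_shift by simp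

lemma sum_splits_Nil_left: "sum_splits (\<lambda>p q. if p = [] then h q else 0) v = h v"
  by (cases v) (simp_all add: sum_splits_Cons sum_splits_def)

lemma sum_splits_Nil_right: "sum_splits (\<lambda>p q. if q = [] then h p else 0) v = h v"
  by (induction v arbitrary: h) (simp_all add: sum_splits_Cons)

lemma sum_splits_append_Cons:
  "sum_splits g (p @ x # q) =
     sum_splits (\<lambda>s t. g s (t @ x # q)) p + sum_splits (\<lambda>s t. g (p @ x # s) t) q"
  by (induction p arbitrary: g) (simp_all add: sum_splits_Cons add.assoc)

lemma sum_splits_assoc:
  "sum_splits (\<lambda>p r. sum_splits (\<lambda>m s. f p m s) r) v =
   sum_splits (\<lambda>q s. sum_splits (\<lambda>p m. f p m s) q) v"
  by (induction v arbitrary: f) (simp_all add: sum_splits_Cons sum_splits_add add.assoc)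

lemma sum_splits_assoc4:
  "sum_splits (\<lambda>q r. sum_splits (\<lambda>m p. sum_splits (\<lambda>s t. f s t m p) q) r) v =
   sum_splits (\<lambda>s R. sum_splits (\<lambda>M p. sum_splits (\<lambda>t m. f s t m p) M) R) v"
proof -
  have "sum_splits (\<lambda>m p. sum_splits (\<lambda>s t. f s t m p) q) r =
      sum_splits (\<lambda>s t. sum_splits (\<lambda>m p. f s t m p) r) q" for q r
    by (rule sum_splits_swap)
  then have "sum_splits (\<lambda>q r. sum_splits (\<lambda>m p. sum_splits (\<lambda>s t. f s t m p) q) r) v =
      sum_splits (\<lambda>q r. sum_splits (\<lambda>s t. sum_splits (\<lambda>m p. f s t m p) r) q) v"
    by simp
  also have "\<dots> = sum_splits (\<lambda>s R. sum_splits (\<lambda>t r. sum_splits (\<lambda>m p. f s t m p) r) R) v"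
    by (rule sum_splits_assoc[symmetric])
  also have "\<dots> = sum_splits (\<lambda>s R. sum_splits (\<lambda>M p. sum_splits (\<lambda>t m. f s t m p) M) R) v"
    by (simp only: sum_splits_assoc)
  finally show ?thesis .
qed

section \<open>The free algebra and the cyclic derivative\<close>

lemma ncmul_eq_sum_splits: "ncmul a b v = sum_splits (\<lambda>p q. a p * b q) v"
  by (simp add: ncmul_def sum_splits_def)

lemma linear_ncmul_left: "linear (\<lambda>a. ncmul a b)"
  by (rule linearI)
    (simp_all add: ncmul_def fun_eq_iff distrib_right sum.distrib sum_distrib_left mult.assoc)

lemma linear_ncmul_right: "linear (ncmul a)"
  by (rule linearI)
    (simp_all add: ncmul_def fun_eq_iff distrib_left sum.distrib sum_distrib_left mult.left_commute)

lemmas ncmul_diff_left = linear_diff[OF linear_ncmul_left]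
  and ncmul_diff_right = linear_diff[OF linear_ncmul_right]

lemma ncmul_assoc: "ncmul (ncmul a b) c = ncmul a (ncmul b c)"
proof
  fix v
  have "ncmul (ncmul a b) c v = sum_splits (\<lambda>q s. sum_splits (\<lambda>p m. a p * b m * c s) q) v"
    by (simp add: ncmul_eq_sum_splits sum_splits_mult_right)
  also have "\<dots> = sum_splits (\<lambda>p r. sum_splits (\<lambda>m s. a p * b m * c s) r) v"
    by (rule sum_splits_assoc[symmetric])
  also have "\<dots> = ncmul a (ncmul b c) v"
    by (simp add: ncmul_eq_sum_splits sum_splits_mult_left mult.assoc)
  finally show "ncmul (ncmul a b) c v = ncmul a (ncmul b c) v" .
qed

lemma linear_bracket_left: "linear (\<lambda>a. bracket a b)"
  unfolding bracket_def by (intro real_vector.module_hom_sub linear_ncmul_left linear_ncmul_right)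

lemma linear_bracket_right: "linear (bracket a)"
  unfolding bracket_def by (intro real_vector.module_hom_sub linear_ncmul_left linear_ncmul_right)

lemma bracket_antisym: "bracket a b = - bracket b a"
  by (simp add: bracket_def)

lemma bracket_derivation:
  "bracket c (bracket a b) = bracket (bracket c a) b + bracket a (bracket c b)"
  by (simp add: bracket_def ncmul_diff_left ncmul_diff_right ncmul_assoc)

lemma finite_lists_length_gen: "finite {w :: gen list. length w = n}"
proof -
  have "(UNIV :: gen set) \<subseteq> {GX, GY}"
    using gen.exhaust by auto
  then have "finite (UNIV :: gen set)"
    by (rule finite_subset) simp
  then show ?thesis
    using finite_lists_length_eq[of "UNIV :: gen set" n] by simp
qed

lemma rotation_at_iff:
  assumes "length w = Suc n" "i \<le> n" "length v = n"
  shows "(w ! i = GX \<and> drop (Suc i) w @ take i w = v) \<longleftrightarrow> w = drop (n - i) v @ GX # take (n - i) v"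
proof
  assume rot: "w ! i = GX \<and> drop (Suc i) w @ take i w = v"
  have "take (n - i) v = drop (Suc i) w" "drop (n - i) v = take i w"
    using rot assms by auto
  then show "w = drop (n - i) v @ GX # take (n - i) v"
    using rot assms id_take_nth_drop[of i w] by simp
qed (use assms in \<open>simp add: nth_append\<close>)

lemma dx_tr_eq_sum_splits: "dx_tr a v = sum_splits (\<lambda>q p. a (p @ GX # q)) v"
proof -
  define n where "n = length v"
  define W where "W = {w :: gen list. length w = Suc n}"
  define rot where "rot i w \<longleftrightarrow> w ! i = GX \<and> drop (Suc i) w @ take i w = v" for i w
  have "dx_tr a v = (\<Sum>w\<in>W. \<Sum>i<Suc n. if rot i w then a w else 0)"
    unfolding dx_tr_def W_def n_def rot_def
    by (intro sum.cong refl) (auto simp: sum_distrib_left intro!: sum.cong simp del: sum.lessThan_Suc)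
  also have "\<dots> = (\<Sum>i<Suc n. \<Sum>w\<in>W. if w = drop (n - i) v @ GX # take (n - i) v then a w else 0)"
    unfolding rot_def W_def by (subst sum.swap) (intro sum.cong refl; simp add: rotation_at_iff n_def)
  also have "\<dots> = (\<Sum>i<Suc n. a (drop (n - i) v @ GX # take (n - i) v))"
    using finite_lists_length_gen by (intro sum.cong) (auto simp: W_def n_def)
  also have "\<dots> = (\<Sum>k<Suc n. a (drop k v @ GX # take k v))"
    using sum.nat_diff_reindex[of "\<lambda>k. a (drop k v @ GX # take k v)" "Suc n"] by simp
  also have "\<dots> = sum_splits (\<lambda>q p. a (p @ GX # q)) v"
    unfolding sum_splits_def n_def by (intro sum.cong) auto
  finally show ?thesis .
qed

lemma linear_dx_tr: "linear dx_tr"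
  by (rule linearI) (simp_all add: fun_eq_iff dx_tr_eq_sum_splits sum_splits_add sum_splits_mult_left)

lemma linear_kappa: "linear kappa"
  using linear_compose[OF linear_ncmul_right linear_dx_tr] by (simp add: comp_def kappa_def[abs_def])

text \<open>\<open>dx_tr_in a c\<close> is \<open>J(a, c)\<close>, the part of \<open>\<partial>\<^sub>x tr(a c)\<close> coming from the occurrences of \<open>x\<close> in \<open>a\<close>:
each factorisation \<open>a = a' x a''\<close> contributes \<open>a'' c a'\<close>.\<close>

definition dx_tr_in :: "ncp \<Rightarrow> ncp \<Rightarrow> ncp" where
  "dx_tr_in a c = (\<lambda>v. sum_splits (\<lambda>q r. sum_splits (\<lambda>m p. a (p @ GX # q) * c m) r) v)"

lemma linear_dx_tr_in_left: "linear (\<lambda>a. dx_tr_in a c)"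
  by (rule linearI)
    (simp_all add: dx_tr_in_def fun_eq_iff distrib_right sum_splits_add sum_splits_mult_left mult.assoc)

lemma linear_dx_tr_in_right: "linear (dx_tr_in a)"
  by (rule linearI)
    (simp_all add: dx_tr_in_def fun_eq_iff distrib_left sum_splits_add sum_splits_mult_left mult.left_commute)

lemma ncmul_append_Cons:
  "ncmul a b (p @ x # q) =
     sum_splits (\<lambda>s t. a s * b (t @ x # q)) p + sum_splits (\<lambda>s t. a (p @ x # s) * b t) q"
  by (simp add: ncmul_eq_sum_splits sum_splits_append_Cons)

lemma dx_tr_ncmul: "dx_tr (ncmul a b) = dx_tr_in a b + dx_tr_in b a"
proof
  fix v
  have "dx_tr (ncmul a b) v =
      sum_splits (\<lambda>q p. sum_splits (\<lambda>s t. a (p @ GX # s) * b t) q) v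
    + sum_splits (\<lambda>q p. sum_splits (\<lambda>s t. a s * b (t @ GX # q)) p) v"
    by (simp add: dx_tr_eq_sum_splits ncmul_append_Cons sum_splits_add add.commute)
  also have "sum_splits (\<lambda>q p. sum_splits (\<lambda>s t. a (p @ GX # s) * b t) q) v = dx_tr_in a b v"
    unfolding dx_tr_in_def by (rule sum_splits_assoc[symmetric])
  also have "sum_splits (\<lambda>q p. sum_splits (\<lambda>s t. a s * b (t @ GX # q)) p) v = dx_tr_in b a v"
    by (simp add: dx_tr_in_def mult.commute)
  finally show "dx_tr (ncmul a b) v = (dx_tr_in a b + dx_tr_in b a) v"
    by simp
qed

lemma dx_tr_in_ncmul: "dx_tr_in (ncmul u w) c = dx_tr_in u (ncmul w c) + dx_tr_in w (ncmul c u)"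
proof
  fix v
  have in_u: "sum_splits (\<lambda>q r. sum_splits (\<lambda>m p. sum_splits (\<lambda>s t. u (p @ GX # s) * w t) q * c m) r) v
      = dx_tr_in u (ncmul w c) v"
    unfolding sum_splits_mult_right sum_splits_assoc4
    by (simp add: dx_tr_in_def ncmul_eq_sum_splits sum_splits_mult_left mult.assoc)
  have in_w: "sum_splits (\<lambda>q r. sum_splits (\<lambda>m p. sum_splits (\<lambda>s t. u s * w (t @ GX # q)) p * c m) r) v
      = dx_tr_in w (ncmul c u) v"
  proof -
    have "sum_splits (\<lambda>m p. sum_splits (\<lambda>s t. u s * w (t @ GX # q)) p * c m) r
        = sum_splits (\<lambda>m p. sum_splits (\<lambda>s t. c m * u s * w (t @ GX # q)) p) r" for q r
      by (simp add: sum_splits_mult_right sum_splits_mult_left mult_ac)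
    also have "\<dots> q r = sum_splits (\<lambda>M t. sum_splits (\<lambda>m s. c m * u s * w (t @ GX # q)) M) r" for q r
      by (rule sum_splits_assoc)
    finally show ?thesis
      by (simp add: dx_tr_in_def ncmul_eq_sum_splits sum_splits_mult_left mult_ac)
  qed
  have "dx_tr_in (ncmul u w) c v =
      sum_splits (\<lambda>q r. sum_splits (\<lambda>m p. sum_splits (\<lambda>s t. u (p @ GX # s) * w t) q * c m) r) v
    + sum_splits (\<lambda>q r. sum_splits (\<lambda>m p. sum_splits (\<lambda>s t. u s * w (t @ GX # q)) p * c m) r) v"
    by (simp add: dx_tr_in_def ncmul_append_Cons distrib_right sum_splits_add add.commute)
  then show "dx_tr_in (ncmul u w) c v = (dx_tr_in u (ncmul w c) + dx_tr_in w (ncmul c u)) v"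
    by (simp add: in_u in_w)
qed

lemma dx_tr_in_gx: "dx_tr_in gx c = c"
proof
  fix v
  have "p @ GX # q = [GX] \<longleftrightarrow> p = [] \<and> q = []" for p q
    by (cases p) auto
  then have "dx_tr_in gx c v =
      sum_splits (\<lambda>q r. if q = [] then sum_splits (\<lambda>m p. if p = [] then c m else 0) r else 0) v"
    unfolding dx_tr_in_def gx_def by (auto intro!: sum_splits_cong)
  then show "dx_tr_in gx c v = c v"
    by (simp add: sum_splits_Nil_left sum_splits_Nil_right)
qed

lemma dx_tr_in_gy: "dx_tr_in gy c = 0"
proof -
  have "p @ GX # q \<noteq> [GY]" for p q
    by (cases p) auto
  then show ?thesis
    by (simp add: dx_tr_in_def gy_def sum_splits_def fun_eq_iff)
qed

lemma kappa_bracket: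
  "kappa (bracket a b) = bracket a b + dx_tr_in a (bracket b gx) - dx_tr_in b (bracket a gx)"
proof -
  have "dx_tr (ncmul gx (ncmul a b)) = ncmul a b + dx_tr_in a (ncmul b gx) + dx_tr_in b (ncmul gx a)"
    for a b by (simp add: dx_tr_ncmul dx_tr_in_gx dx_tr_in_ncmul)
  then show ?thesis
    by (simp add: kappa_def bracket_def ncmul_diff_right linear_diff[OF linear_dx_tr]
        linear_diff[OF linear_dx_tr_in_right])
qed

section \<open>\<open>\<kappa>\<close> on the brackets \<open>[x\<^sub>i, x\<^sub>j]\<close>\<close>

abbreviation xi :: "nat \<Rightarrow> ncp" where
  "xi i \<equiv> adypow i gx"

definition neg_ad_y :: "ncp \<Rightarrow> ncp" where
  "neg_ad_y l = bracket l gy"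

lemma neg_ad_y_eq: "neg_ad_y l = - bracket gy l"
  by (simp add: neg_ad_y_def bracket_def)

lemma linear_neg_ad_y: "linear neg_ad_y"
  unfolding neg_ad_y_def[abs_def] by (rule linear_bracket_left)

lemma adypow_Suc: "adypow (Suc i) a = bracket gy (adypow i a)"
  by (simp add: adypow_def)

lemma adypow_0 [simp]: "adypow 0 a = a"
  by (simp add: adypow_def)

lemma dx_tr_in_xi: "dx_tr_in (xi i) c = (neg_ad_y ^^ i) c"
proof (induction i arbitrary: c)
  case 0
  then show ?case by (simp add: dx_tr_in_gx)
next
  case (Suc i)
  have "dx_tr_in (xi (Suc i)) c = dx_tr_in (ncmul gy (xi i)) c - dx_tr_in (ncmul (xi i) gy) c"
    by (simp add: adypow_Suc bracket_def linear_diff[OF linear_dx_tr_in_left])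
  also have "\<dots> = dx_tr_in (xi i) (neg_ad_y c)"
    by (simp add: dx_tr_in_ncmul dx_tr_in_gy neg_ad_y_def bracket_def
        linear_diff[OF linear_dx_tr_in_right])
  also have "\<dots> = (neg_ad_y ^^ Suc i) c"
    by (simp add: Suc.IH funpow_swap1)
  finally show ?case .
qed

lemma kappa_bracket_xi:
  "kappa (bracket (xi i) (xi j)) =
     bracket (xi i) (xi j) + (neg_ad_y ^^ i) (bracket (xi j) gx) - (neg_ad_y ^^ j) (bracket (xi i) gx)"
  by (simp add: kappa_bracket dx_tr_in_xi)

section \<open>Bivariate polynomials\<close>

definition bideg_le :: "bipoly \<Rightarrow> nat \<Rightarrow> bool" where
  "bideg_le P N \<longleftrightarrow> degree P \<le> N \<and> (\<forall>j. degree (coeff P j) \<le> N)"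

lemma bideg_le_exists: "\<exists>N. bideg_le P N"
proof -
  define N where "N = degree P + (\<Sum>j\<le>degree P. degree (coeff P j))"
  have "degree (coeff P j) \<le> N" for j
  proof (cases "j \<le> degree P")
    case True
    then have "degree (coeff P j) \<le> (\<Sum>j\<le>degree P. degree (coeff P j))"
      by (intro member_le_sum) auto
    then show ?thesis by (simp add: N_def)
  qed (simp add: coeff_eq_0)
  then have "bideg_le P N"
    by (simp add: bideg_le_def N_def)
  then show ?thesis ..
qed

lemma bideg_le_mono: "bideg_le P N \<Longrightarrow> N \<le> M \<Longrightarrow> bideg_le P M"
  unfolding bideg_le_def using order_trans by blast

lemma bideg_le_add: "bideg_le P N \<Longrightarrow> bideg_le Q N \<Longrightarrow> bideg_le (P + Q) N"
  by (simp add: bideg_le_def degree_add_le)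

lemma bideg_le_const_mult: "bideg_le P N \<Longrightarrow> bideg_le ([:[:c:]:] * P) N"
  by (auto simp: bideg_le_def intro: order_trans[OF degree_smult_le])

lemma sum_atMost_degree_eq:
  assumes "degree p \<le> N" "\<And>i. f i 0 = 0"
  shows "(\<Sum>i\<le>degree p. f i (coeff p i)) = (\<Sum>i\<le>N. f i (coeff p i))"
  by (rule sum.mono_neutral_left) (use assms in \<open>auto simp: coeff_eq_0\<close>)

lemma sum_bcoeff_truncate:
  assumes "bideg_le P N" "\<And>i j. f i j 0 = 0"
  shows "(\<Sum>j\<le>degree P. \<Sum>i\<le>degree (coeff P j). f i j (bcoeff P i j)) =
         (\<Sum>j\<le>N. \<Sum>i\<le>N. f i j (bcoeff P i j))"
proof -
  have "(\<Sum>i\<le>degree (coeff P j). f i j (bcoeff P i j)) = (\<Sum>i\<le>N. f i j (bcoeff P i j))" for j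
    using assms unfolding bideg_le_def bcoeff_def by (intro sum_atMost_degree_eq) auto
  moreover have "(\<Sum>j\<le>degree P. \<Sum>i\<le>N. f i j (coeff (coeff P j) i)) =
      (\<Sum>j\<le>N. \<Sum>i\<le>N. f i j (coeff (coeff P j) i))"
    using assms unfolding bideg_le_def
    by (intro sum_atMost_degree_eq[where f = "\<lambda>j q. \<Sum>i\<le>N. f i j (coeff q i)"]) auto
  ultimately show ?thesis
    by (simp add: bcoeff_def)
qed

lemma bipoly_monom: "monom (monom c i) j = [:[:c:]:] * (Xb ^ i * Yb ^ j)"
  by (simp add: Xb_def Yb_def poly_const_pow monom_altdef)

lemma Xb_pow_mult_Yb_pow: "Xb ^ i * Yb ^ j = monom (monom 1 i) j"
  using bipoly_monom[of 1 i j] by (simp flip: one_pCons)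

lemma bcoeff_monom: "bcoeff (monom (monom c i) j) a b = (if a = i \<and> b = j then c else 0)"
  by (simp add: bcoeff_def coeff_monom)

lemma bcoeff_sum: "bcoeff (sum F A) a b = (\<Sum>x\<in>A. bcoeff (F x) a b)"
  by (simp add: bcoeff_def coeff_sum)

lemma sum_sum_delta:
  "(\<Sum>j\<le>N. \<Sum>i\<le>(N::nat). if i = a \<and> j = b then f i j else 0) =
   (if a \<le> N \<and> b \<le> N then f a b else (0::'a::comm_monoid_add))"
proof -
  have "(\<Sum>i\<le>N. if i = a \<and> j = b then f i j else 0) = (if j = b then if a \<le> N then f a j else 0 else 0)"
    for j by (cases "j = b") (simp_all add: sum.delta)
  then show ?thesis
    by (simp add: sum.delta)
qed

lemma bipoly_expansion:
  assumes "bideg_le P N"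
  shows "P = (\<Sum>j\<le>N. \<Sum>i\<le>N. [:[:bcoeff P i j:]:] * (Xb ^ i * Yb ^ j))"
proof -
  have "P = (\<Sum>j\<le>degree P. \<Sum>i\<le>degree (coeff P j). monom (monom (bcoeff P i j) i) j)"
    by (simp add: bcoeff_def monom_sum[symmetric] poly_as_sum_of_monoms)
  also have "\<dots> = (\<Sum>j\<le>N. \<Sum>i\<le>N. monom (monom (bcoeff P i j) i) j)"
    using assms by (rule sum_bcoeff_truncate) simp
  finally show ?thesis
    by (simp add: bipoly_monom)
qed

lemma bsubst_expansion:
  assumes "bideg_le P N"
  shows "bsubst P f g = (\<Sum>j\<le>N. \<Sum>i\<le>N. [:[:bcoeff P i j:]:] * (f ^ i * g ^ j))"
proof -
  have "bsubst P f g = (\<Sum>j\<le>degree P. \<Sum>i\<le>degree (coeff P j). [:[:bcoeff P i j:]:] * (f ^ i * g ^ j))"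
    by (simp add: bsubst_def poly_altdef degree_map_poly coeff_map_poly bcoeff_def
        sum_distrib_right mult.assoc del: mult_pCons_left)
  also have "\<dots> = (\<Sum>j\<le>N. \<Sum>i\<le>N. [:[:bcoeff P i j:]:] * (f ^ i * g ^ j))"
    using assms by (rule sum_bcoeff_truncate) simp
  finally show ?thesis .
qed

lemma bcoeff_eq_0_beyond:
  assumes "bideg_le P N" "N < i \<or> N < j"
  shows "bcoeff P i j = 0"
proof (cases "N < j")
  case True
  then show ?thesis
    using assms(1) by (simp add: bideg_le_def bcoeff_def coeff_eq_0)
next
  case False
  then have "degree (coeff P j) < i"
    using assms le_less_trans unfolding bideg_le_def by blast
  then show ?thesis
    by (simp add: bcoeff_def coeff_eq_0)
qed

lemma bcoeff_sum_monoms: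
  "bcoeff (\<Sum>j\<le>N. \<Sum>i\<le>N. [:[:h i j:]:] * (Xb ^ i * Yb ^ j)) a b =
   (if a \<le> N \<and> b \<le> N then h a b else 0)"
proof -
  have "bcoeff (monom (monom (h i j) i) j) a b = (if i = a \<and> j = b then h i j else 0)" for i j
    by (auto simp: bcoeff_monom)
  then show ?thesis
    unfolding bipoly_monom[symmetric] bcoeff_sum by (simp add: sum_sum_delta)
qed

lemma bcoeff_bsubst_Yb_Xb: "bcoeff (bsubst P Yb Xb) i j = bcoeff P j i"
proof -
  obtain N where N: "bideg_le P N"
    using bideg_le_exists by blast
  have swapped: "bsubst P Yb Xb = (\<Sum>j\<le>N. \<Sum>i\<le>N. [:[:bcoeff P j i:]:] * (Xb ^ i * Yb ^ j))"
    unfolding bsubst_expansion[OF N] by (subst sum.swap) (simp only: mult.commute)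
  show ?thesis
    using bcoeff_eq_0_beyond[OF N, of j i] unfolding swapped bcoeff_sum_monoms by auto
qed

lemma bcoeff_antisym:
  assumes "bsubst P Yb Xb = - P"
  shows "bcoeff P j i = - bcoeff P i j"
  using bcoeff_bsubst_Yb_Xb[of P i j] by (simp add: assms bcoeff_def)

section \<open>The map \<open>P \<mapsto> l\<^sub>P\<close>\<close>

lemma lP_expansion:
  assumes "bideg_le P N"
  shows "lP P = (\<Sum>j\<le>N. \<Sum>i\<le>N. bcoeff P i j *\<^sub>R bracket (xi i) (xi j))"
proof -
  have "(\<lambda>w. c * bracket (xi i) (xi j) w) = c *\<^sub>R bracket (xi i) (xi j)" for c i j
    by (simp add: fun_eq_iff)
  then have "lP P = (\<Sum>j\<le>degree P. \<Sum>i\<le>degree (coeff P j). bcoeff P i j *\<^sub>R bracket (xi i) (xi j))"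
    unfolding lP_def by simp
  also have "\<dots> = (\<Sum>j\<le>N. \<Sum>i\<le>N. bcoeff P i j *\<^sub>R bracket (xi i) (xi j))"
    using assms by (rule sum_bcoeff_truncate) (simp add: fun_eq_iff)
  finally show ?thesis .
qed

lemma lP_add: "lP (P + Q) = lP P + lP Q"
proof -
  obtain N1 N2 where "bideg_le P N1" "bideg_le Q N2"
    using bideg_le_exists by blast
  then have P: "bideg_le P (N1 + N2)" and Q: "bideg_le Q (N1 + N2)"
    by (auto elim: bideg_le_mono)
  then show ?thesis
    by (simp add: lP_expansion[OF P] lP_expansion[OF Q] lP_expansion[OF bideg_le_add[OF P Q]]
        bcoeff_def scaleR_add_left sum.distrib)
qed

lemma lP_const_mult: "lP ([:[:c:]:] * P) = c *\<^sub>R lP P"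
proof -
  obtain N where N: "bideg_le P N"
    using bideg_le_exists by blast
  have "lP ([:[:c:]:] * P) = (\<Sum>j\<le>N. \<Sum>i\<le>N. bcoeff ([:[:c:]:] * P) i j *\<^sub>R bracket (xi i) (xi j))"
    by (rule lP_expansion[OF bideg_le_const_mult[OF N]])
  also have "\<dots> = c *\<^sub>R lP P"
    by (simp add: lP_expansion[OF N] bcoeff_def scaleR_sum_right)
  finally show ?thesis .
qed

lemma lP_0 [simp]: "lP 0 = 0"
  using lP_const_mult[of 0 0] by simp

lemma lP_sum: "lP (sum F A) = (\<Sum>a\<in>A. lP (F a))"
  by (induction A rule: infinite_finite_induct) (simp_all add: lP_add)

lemma lP_minus: "lP (- P) = - lP P"
  using lP_add[of "- P" P] by (simp add: eq_neg_iff_add_eq_0)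

lemma lP_diff: "lP (P - Q) = lP P - lP Q"
  using lP_add[of P "- Q"] by (simp add: lP_minus)

lemma lP_Xb_pow_mult_Yb_pow: "lP (Xb ^ i * Yb ^ j) = bracket (xi i) (xi j)"
proof -
  have "bideg_le (Xb ^ i * Yb ^ j) (i + j)"
    by (auto simp: bideg_le_def Xb_pow_mult_Yb_pow coeff_monom degree_monom_eq)
  moreover have "(if a = i \<and> b = j then 1 else 0) *\<^sub>R bracket (xi a) (xi b) =
      (if a = i \<and> b = j then bracket (xi a) (xi b) else 0)" for a b
    by simp
  ultimately show ?thesis
    by (simp add: lP_expansion Xb_pow_mult_Yb_pow bcoeff_monom sum_sum_delta)
qed

lemma lP_bsubst:
  assumes "bideg_le P N"
  shows "lP (bsubst P f g) = (\<Sum>j\<le>N. \<Sum>i\<le>N. bcoeff P i j *\<^sub>R lP (f ^ i * g ^ j))"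
  by (simp add: bsubst_expansion[OF assms] lP_sum lP_const_mult del: mult_pCons_left)

lemma lP_Xb_plus_Yb_mult: "lP ((Xb + Yb) * R) = bracket gy (lP R)"
proof -
  obtain N where N: "bideg_le R N"
    using bideg_le_exists by blast
  have monom: "lP ((Xb + Yb) * (Xb ^ i * Yb ^ j)) = bracket gy (bracket (xi i) (xi j))" for i j
  proof -
    have "(Xb + Yb) * (Xb ^ i * Yb ^ j) = Xb ^ Suc i * Yb ^ j + Xb ^ i * Yb ^ Suc j"
      by (simp add: algebra_simps)
    then show ?thesis
      by (simp only: lP_add lP_Xb_pow_mult_Yb_pow bracket_derivation[of gy] adypow_Suc)
  qed
  have "(Xb + Yb) * R = (\<Sum>j\<le>N. \<Sum>i\<le>N. [:[:bcoeff R i j:]:] * ((Xb + Yb) * (Xb ^ i * Yb ^ j)))"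
    using arg_cong[OF bipoly_expansion[OF N], of "\<lambda>Q. (Xb + Yb) * Q"]
    by (simp add: sum_distrib_left mult.left_commute del: mult_pCons_left)
  then show ?thesis
    by (simp add: lP_sum lP_const_mult monom lP_expansion[OF N] linear_sum[OF linear_bracket_right]
        linear_cmul[OF linear_bracket_right] del: mult_pCons_left)
qed

lemma lP_neg_Xb_Yb_pow_mult: "lP ((- Xb - Yb) ^ i * R) = (neg_ad_y ^^ i) (lP R)"
proof (induction i)
  case 0
  then show ?case by simp
next
  case (Suc i)
  have "(- Xb - Yb) ^ Suc i * R = - ((Xb + Yb) * ((- Xb - Yb) ^ i * R))"
    by (simp add: algebra_simps)
  then show ?case
    by (simp add: lP_minus lP_Xb_plus_Yb_mult Suc.IH neg_ad_y_eq)
qed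

lemma kappa_lP:
  assumes "bideg_le P N"
  shows "kappa (lP P) = lP P
    + (\<Sum>j\<le>N. \<Sum>i\<le>N. bcoeff P i j *\<^sub>R (neg_ad_y ^^ i) (bracket (xi j) gx))
    - (\<Sum>j\<le>N. \<Sum>i\<le>N. bcoeff P i j *\<^sub>R (neg_ad_y ^^ j) (bracket (xi i) gx))"
  by (simp add: lP_expansion[OF assms] linear_sum[OF linear_kappa] linear_cmul[OF linear_kappa]
      kappa_bracket_xi scaleR_add_right scaleR_diff_right sum.distrib sum_subtractf)

lemma lP_bsubst_neg_Xb_Yb_Xb:
  assumes "bideg_le P N"
  shows "lP (bsubst P (- Xb - Yb) Xb) =
    (\<Sum>j\<le>N. \<Sum>i\<le>N. bcoeff P i j *\<^sub>R (neg_ad_y ^^ i) (bracket (xi j) gx))"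
  using lP_Xb_pow_mult_Yb_pow[of _ 0] by (simp add: lP_bsubst[OF assms] lP_neg_Xb_Yb_pow_mult)

lemma lP_bsubst_neg_Xb_Yb_Yb:
  assumes "bideg_le P N"
  shows "lP (bsubst P (- Xb - Yb) Yb) =
    - (\<Sum>j\<le>N. \<Sum>i\<le>N. bcoeff P i j *\<^sub>R (neg_ad_y ^^ i) (bracket (xi j) gx))"
  using lP_Xb_pow_mult_Yb_pow[of 0]
  by (simp add: lP_bsubst[OF assms] lP_neg_Xb_Yb_pow_mult bracket_antisym[of gx]
      linear_neg[OF linear_funpow[OF linear_neg_ad_y]] sum_negf)

theorem mainTheorem17:
  fixes P :: bipoly
  assumes antisym: "bsubst P Yb Xb = - P"
  shows "kappa (lP P) =
         lP (P - bsubst P (- Xb - Yb) Yb + bsubst P (- Xb - Yb) Xb)"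
proof -
  obtain N where N: "bideg_le P N"
    using bideg_le_exists by blast
  have "(\<Sum>j\<le>N. \<Sum>i\<le>N. bcoeff P i j *\<^sub>R (neg_ad_y ^^ j) (bracket (xi i) gx)) =
      - (\<Sum>j\<le>N. \<Sum>i\<le>N. bcoeff P i j *\<^sub>R (neg_ad_y ^^ i) (bracket (xi j) gx))"
    by (rule sum_sum_swap_antisym) (rule bcoeff_antisym[OF antisym])
  then show ?thesis
    by (simp add: kappa_lP[OF N] lP_bsubst_neg_Xb_Yb_Xb[OF N] lP_bsubst_neg_Xb_Yb_Yb[OF N]
        lP_add lP_diff)
qed

end
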